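(* Let $S$ be the set of positive integers $\ell$ for which there exists $n_0$ with $\Delta_\ell(n)>0$ for all $n\geq n_0$, and for each $\ell\in S$ let $n_0(\ell)$ be an integer such that $\Delta_\ell(n)>0$ for all $n\ge n_0(\ell)$. If $S$ is infinite, then the sequence $(n_0(\ell))_{\ell\in S}$ is unbounded.
   Context: For integers $n\geq 0$ let $S_n$ be the symmetric group on $n$ elements ($S_0$ trivial). For an integer $\ell\geq 1$ let $C_{\ell,n}=\{(\pi_1,\dots,\pi_\ell)\in S_n^\ell : \pi_j\pi_k=\pi_k\pi_j \text{ for all } 1\le j,k\le \ell\}$ and $N_\ell(n)=|C_{\ell,n}|/|S_n|$ (so $N_\ell(0)=1$). Define $\Delta_\ell(n)=N_\ell(n)^2-N_\ell(n-1)N_\ell(n+1)$ for $n\geq 1$. *)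

theory Defs
  imports Complex_Main "HOL-Combinatorics.Permutations"
begin

text \<open>S_n is realised as the permutations of {0..<n} (functions nat => nat that
permute {..<n}); an l-tuple is a function from {1..l}, extended by id elsewhere.\<close>

definition comm_tuples :: "nat \<Rightarrow> nat \<Rightarrow> (nat \<Rightarrow> nat \<Rightarrow> nat) set" where
  "comm_tuples l n = {p. (\<forall>j\<in>{1..l}. p j permutes {..<n})
                        \<and> (\<forall>j. j \<notin> {1..l} \<longrightarrow> p j = id)
                        \<and> (\<forall>j\<in>{1..l}. \<forall>k\<in>{1..l}. p j \<circ> p k = p k \<circ> p j)}"

definition N_comm :: "nat \<Rightarrow> nat \<Rightarrow> real" where
  "N_comm l n = real (card (comm_tuples l n)) / fact n"

definition Delta :: "nat \<Rightarrow> nat \<Rightarrow> real" where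
  "Delta l n = (N_comm l n)\<^sup>2 - N_comm l (n - 1) * N_comm l (n + 1)"

definition S_eventually_pos :: "nat set" where
  "S_eventually_pos = {l. l \<ge> 1 \<and> (\<exists>n0::nat. \<forall>n. n \<ge> 1 \<and> n \<ge> n0 \<longrightarrow> Delta l n > 0)}"

end

(* Write c(n) = |C_{l,n}|.  A commuting tuple is determined by orbit data of the abelian group
   it generates, which gives c(n) <= K_n * m(n)^l with K_n independent of l, where m(n) is the
   largest product of the part sizes of a partition of n; for n = 3t+1, m(n) = 4 * 3^(t-1).
   Conversely, rotations give c(k) >= k^l and disjoint unions give c(a) c(b) <= c(a+b), so
   c(3t) >= 3^(tl) and c(3t+2) >= 2^l 3^(tl).  With b = 9^(t-1) this yields
   (n+1) c(n)^2 <= (n+1) K_n^2 (16 b)^l  and  n c(n-1) c(n+1) >= (18 b)^l  for n = 3t+1,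
   so Delta_l(3t+1) < 0 for all large l.  If n_0 were bounded by B on the infinite set S,
   then for t > B and large l in S also Delta_l(3t+1) > 0. *)

theory Submission
  imports Defs "HOL-Real_Asymp.Real_Asymp"
begin

(* The largest product of the part sizes of a partition of n: all parts are 3, except that
   the remainder is absorbed into one part 4 or 2. *)
fun max_part_prod :: "nat \<Rightarrow> nat" where
  "max_part_prod n = (if n \<le> 4 then max 1 n else 3 * max_part_prod (n - 3))"

declare max_part_prod.simps [simp del]

lemma max_part_prod_small: "n \<le> 4 \<Longrightarrow> max_part_prod n = max 1 n"
  by (simp add: max_part_prod.simps)

lemma max_part_prod_step: "n \<ge> 5 \<Longrightarrow> max_part_prod n = 3 * max_part_prod (n - 3)"
  by (simp add: max_part_prod.simps)

lemma mult_max_part_prod_le: "k \<ge> 1 \<Longrightarrow> k * max_part_prod m \<le> max_part_prod (k + m)"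
proof (induction "k + m" arbitrary: k m rule: less_induct)
  case less
  consider "m \<ge> 5" | "k \<ge> 5" "m \<le> 4" | "k \<le> 4" "m \<le> 4" by linarith
  then show ?case
  proof cases
    case 1
    then have "k * max_part_prod (m - 3) \<le> max_part_prod (k + (m - 3))"
      using less.hyps[of k "m - 3"] less.prems by simp
    then show ?thesis
      using 1 max_part_prod_step[of m] max_part_prod_step[of "k + m"] by simp
  next
    case 2
    have "k * max_part_prod m \<le> 3 * (k - 3) * max_part_prod m"
      using 2 by (intro mult_le_mono1) linarith
    also have "\<dots> \<le> 3 * max_part_prod (k - 3 + m)"
      using less.hyps[of "k - 3" m] 2 by simp
    also have "\<dots> = max_part_prod (k + m)"
      using 2 max_part_prod_step[of "k + m"] by (simp add: add.commute add_diff_assoc2)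
    finally show ?thesis .
  next
    case 3
    then show ?thesis
      using \<open>k \<ge> 1\<close>
      by (auto simp: max_part_prod_small max_part_prod_step
               le_Suc_eq numeral_eq_Suc)
  qed
qed

lemma max_part_prod_3t1: "t \<ge> 1 \<Longrightarrow> max_part_prod (3 * t + 1) = 4 * 3 ^ (t - 1)"
proof (induction t rule: dec_induct)
  case base
  then show ?case by (simp add: max_part_prod_small)
next
  case (step t)
  then show ?case
    using max_part_prod_step[of "3 * Suc t + 1"] by (simp add: power_eq_if)
qed

lemma prod_card_fibres_le_max_part_prod:
  "finite X \<Longrightarrow> (\<Prod>y\<in>f ` X. card {x\<in>X. f x = y}) \<le> max_part_prod (card X)"
proof (induction "card X" arbitrary: X rule: less_induct)
  case less
  show ?case
  proof (cases "X = {}")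
    case True
    then show ?thesis by (simp add: max_part_prod_small)
  next
    case False
    then obtain x0 where x0: "x0 \<in> X" by blast
    define F where "F = {x\<in>X. f x = f x0}"
    define X' where "X' = X - F"
    have fin: "finite F" "finite X'" using less.prems by (auto simp: F_def X'_def)
    have "card F \<ge> 1"
      using x0 fin(1) by (metis (mono_tags) F_def One_nat_def Suc_leI card_gt_0_iff empty_iff mem_Collect_eq)
    moreover have card_X: "card X = card F + card X'"
      using fin by (metis F_def X'_def Diff_partition Diff_disjoint card_Un_disjoint mem_Collect_eq subsetI)
    ultimately have "card X' < card X" by simp
    have "f ` X = insert (f x0) (f ` X')" "f x0 \<notin> f ` X'"
      using x0 by (auto simp: X'_def F_def)
    moreover have "{x\<in>X. f x = y} = {x\<in>X'. f x = y}" if "y \<in> f ` X'" for y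
      using that by (auto simp: X'_def F_def)
    ultimately have "(\<Prod>y\<in>f ` X. card {x\<in>X. f x = y})
        = card F * (\<Prod>y\<in>f ` X'. card {x\<in>X'. f x = y})"
      using fin by (simp add: F_def)
    also have "\<dots> \<le> card F * max_part_prod (card X')"
      using less.hyps[OF \<open>card X' < card X\<close> fin(2)] by simp
    also have "\<dots> \<le> max_part_prod (card X)"
      using mult_max_part_prod_le \<open>card F \<ge> 1\<close> card_X by simp
    finally show ?thesis .
  qed
qed

lemma comm_tuples_permutes: "p \<in> comm_tuples l n \<Longrightarrow> j \<in> {1..l} \<Longrightarrow> p j permutes {..<n}"
  by (simp add: comm_tuples_def)

lemma comm_tuples_commute:
  "p \<in> comm_tuples l n \<Longrightarrow> j \<in> {1..l} \<Longrightarrow> k \<in> {1..l} \<Longrightarrow> p j \<circ> p k = p k \<circ> p j"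
  by (simp add: comm_tuples_def)

lemma comm_tuples_outside: "p \<in> comm_tuples l n \<Longrightarrow> j \<notin> {1..l} \<Longrightarrow> p j = id"
  by (simp add: comm_tuples_def)

lemma comp_inv_commute: "bij f \<Longrightarrow> g \<circ> f = f \<circ> g \<Longrightarrow> g \<circ> inv f = inv f \<circ> g"
  by (metis bij_is_inj bij_is_surj comp_assoc comp_id id_comp inj_iff surj_iff)

type_synonym perm_tuple = "nat \<Rightarrow> nat \<Rightarrow> nat"

inductive_set gen_group :: "nat \<Rightarrow> perm_tuple \<Rightarrow> (nat \<Rightarrow> nat) set" for l p where
  gen_id: "id \<in> gen_group l p"
| gen_gen: "j \<in> {1..l} \<Longrightarrow> p j \<in> gen_group l p"
| gen_inv: "j \<in> {1..l} \<Longrightarrow> inv (p j) \<in> gen_group l p"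
| gen_comp: "f \<in> gen_group l p \<Longrightarrow> g \<in> gen_group l p \<Longrightarrow> f \<circ> g \<in> gen_group l p"

definition tuple_orbit :: "nat \<Rightarrow> perm_tuple \<Rightarrow> nat \<Rightarrow> nat set" where
  "tuple_orbit l p x = {w x | w. w \<in> gen_group l p}"

definition orbit_rep :: "nat \<Rightarrow> perm_tuple \<Rightarrow> nat \<Rightarrow> nat" where
  "orbit_rep l p x = Min (tuple_orbit l p x)"

definition orbit_transport :: "nat \<Rightarrow> perm_tuple \<Rightarrow> nat \<Rightarrow> nat \<Rightarrow> nat" where
  "orbit_transport l p x = (SOME w. w \<in> gen_group l p \<and> w (orbit_rep l p x) = x)"

context
  fixes l n p
  assumes p: "p \<in> comm_tuples l n"
begin

lemma gen_group_permutes: "w \<in> gen_group l p \<Longrightarrow> w permutes {..<n}"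
proof (induction rule: gen_group.induct)
  case gen_id
  then show ?case by (rule permutes_id)
next
  case (gen_gen j)
  then show ?case using p by (rule comm_tuples_permutes[rotated])
next
  case (gen_inv j)
  then show ?case using p by (metis comm_tuples_permutes permutes_inv)
next
  case (gen_comp f g)
  then show ?case using permutes_compose by blast
qed

lemma gen_group_commute: "w \<in> gen_group l p \<Longrightarrow> j \<in> {1..l} \<Longrightarrow> p j \<circ> w = w \<circ> p j"
proof (induction rule: gen_group.induct)
  case (gen_inv k)
  then show ?case
    using p by (metis comm_tuples_commute comm_tuples_permutes comp_inv_commute permutes_bij)
next
  case (gen_comp f g)
  then show ?case by (metis comp_assoc)
qed (use p comm_tuples_commute in auto)

lemma gen_group_inv: "w \<in> gen_group l p \<Longrightarrow> inv w \<in> gen_group l p"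
proof (induction rule: gen_group.induct)
  case gen_id
  then show ?case by (metis gen_group.gen_id inv_id)
next
  case (gen_gen j)
  then show ?case by (rule gen_group.gen_inv)
next
  case (gen_inv j)
  then show ?case
    using p by (metis comm_tuples_permutes gen_group.gen_gen inv_inv_eq permutes_bij)
next
  case (gen_comp f g)
  then show ?case
    by (metis gen_group.gen_comp gen_group_permutes o_inv_distrib permutes_bij)
qed

lemma tuple_orbit_subset: "x < n \<Longrightarrow> tuple_orbit l p x \<subseteq> {..<n}"
  unfolding tuple_orbit_def using gen_group_permutes permutes_in_image by fastforce

lemma tuple_orbit_self: "x \<in> tuple_orbit l p x"
  unfolding tuple_orbit_def by (metis (mono_tags) gen_id id_apply mem_Collect_eq)

lemma tuple_orbit_trans: "y \<in> tuple_orbit l p x \<Longrightarrow> z \<in> tuple_orbit l p y \<Longrightarrow> z \<in> tuple_orbit l p x"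
  unfolding tuple_orbit_def by (smt (verit) comp_apply gen_comp mem_Collect_eq)

lemma tuple_orbit_sym: "y \<in> tuple_orbit l p x \<Longrightarrow> x \<in> tuple_orbit l p y"
  unfolding tuple_orbit_def
  by (smt (verit) gen_group_inv gen_group_permutes mem_Collect_eq permutes_inverses(2))

lemma orbit_rep_in: "x < n \<Longrightarrow> orbit_rep l p x \<in> tuple_orbit l p x"
  unfolding orbit_rep_def
  by (metis Min_in empty_iff finite_lessThan finite_subset tuple_orbit_self tuple_orbit_subset)

lemma orbit_rep_less: "x < n \<Longrightarrow> orbit_rep l p x < n"
  using orbit_rep_in tuple_orbit_subset by blast

lemma orbit_rep_eq: "y \<in> tuple_orbit l p x \<Longrightarrow> orbit_rep l p y = orbit_rep l p x"
  unfolding orbit_rep_def by (metis subsetI subset_antisym tuple_orbit_sym tuple_orbit_trans)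

lemma orbit_transport_spec:
  assumes "x < n"
  shows "orbit_transport l p x \<in> gen_group l p" "orbit_transport l p x (orbit_rep l p x) = x"
proof -
  have "x \<in> tuple_orbit l p (orbit_rep l p x)"
    using assms orbit_rep_in tuple_orbit_sym by blast
  then have "\<exists>w. w \<in> gen_group l p \<and> w (orbit_rep l p x) = x"
    unfolding tuple_orbit_def by fastforce
  then show "orbit_transport l p x \<in> gen_group l p" "orbit_transport l p x (orbit_rep l p x) = x"
    unfolding orbit_transport_def by (metis (mono_tags, lifting) someI_ex)+
qed

lemma comm_tuple_decode:
  assumes "x < n" "j \<in> {1..l}"
  shows "p j x = orbit_transport l p x (p j (orbit_rep l p x))"
  using orbit_transport_spec[OF assms(1)] gen_group_commute assms(2) by (metis comp_apply)

end

(* As the group generated by p is abelian, p j x = h (p j r) for the orbit representative r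
   of x and any h in the group with h r = x (comm_tuple_decode).  So p is determined by the
   representatives, one such h per point, and the values of the p j at the representatives.
   Each of these values lies in a fibre of the representative map, which is what bounds the
   number of codes by max_part_prod n ^ l. *)
type_synonym orbit_data = "(nat \<Rightarrow> nat) \<times> (nat \<Rightarrow> nat \<Rightarrow> nat) \<times> (nat \<times> nat \<Rightarrow> nat)"

definition orbit_code :: "nat \<Rightarrow> nat \<Rightarrow> perm_tuple \<Rightarrow> orbit_data" where
  "orbit_code l n p =
     (restrict (orbit_rep l p) {..<n}, restrict (orbit_transport l p) {..<n},
      restrict (\<lambda>(j, y). p j y) ({1..l} \<times> orbit_rep l p ` {..<n}))"

definition orbit_codes :: "nat \<Rightarrow> nat \<Rightarrow> orbit_data set" where
  "orbit_codes l n =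
     (SIGMA r : {..<n} \<rightarrow>\<^sub>E {..<n}. ({..<n} \<rightarrow>\<^sub>E {f. f permutes {..<n}}) \<times>
        (\<Pi>\<^sub>E z \<in> {1..l} \<times> r ` {..<n}. {x \<in> {..<n}. r x = snd z}))"

lemma orbit_code_in:
  assumes p: "p \<in> comm_tuples l n"
  shows "orbit_code l n p \<in> orbit_codes l n"
proof -
  have "p j y < n \<and> orbit_rep l p (p j y) = orbit_rep l p x"
    if "j \<in> {1..l}" "x < n" "y = orbit_rep l p x" for j x y
  proof
    show "p j y < n"
      using that p by (metis comm_tuples_permutes orbit_rep_less permutes_in_image lessThan_iff)
    have "p j y \<in> tuple_orbit l p y"
      unfolding tuple_orbit_def using that(1) gen_gen by blast
    then show "orbit_rep l p (p j y) = orbit_rep l p x"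
      using that p by (metis orbit_rep_eq orbit_rep_in)
  qed
  moreover have "restrict (orbit_rep l p) {..<n} ` {..<n} = orbit_rep l p ` {..<n}" by auto
  ultimately show ?thesis
    using p orbit_rep_less orbit_transport_spec gen_group_permutes
    by (auto simp: orbit_code_def orbit_codes_def)
qed

lemma inj_on_orbit_code: "inj_on (orbit_code l n) (comm_tuples l n)"
proof (rule inj_onI)
  fix p q
  assume p: "p \<in> comm_tuples l n" and q: "q \<in> comm_tuples l n"
    and "orbit_code l n p = orbit_code l n q"
  then have rep: "restrict (orbit_rep l p) {..<n} = restrict (orbit_rep l q) {..<n}"
    and transport: "restrict (orbit_transport l p) {..<n} = restrict (orbit_transport l q) {..<n}"
    and reps: "restrict (\<lambda>(j, y). p j y) ({1..l} \<times> orbit_rep l p ` {..<n})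
             = restrict (\<lambda>(j, y). q j y) ({1..l} \<times> orbit_rep l q ` {..<n})"
    by (simp_all add: orbit_code_def)
  have images: "orbit_rep l p ` {..<n} = orbit_rep l q ` {..<n}"
    using rep by (metis image_restrict_eq)
  have "p j x = q j x" if j: "j \<in> {1..l}" and x: "x < n" for j x
  proof -
    have "orbit_rep l p x = orbit_rep l q x" "orbit_transport l p x = orbit_transport l q x"
      using fun_cong[OF rep, of x] fun_cong[OF transport, of x] x by simp_all
    moreover have "p j (orbit_rep l p x) = q j (orbit_rep l q x)"
      using fun_cong[OF reps, of "(j, orbit_rep l p x)"] j x images rep
      by (auto dest: fun_cong[where x = x])
    ultimately show ?thesis
      using comm_tuple_decode[OF p x j] comm_tuple_decode[OF q x j] by simp
  qed
  moreover have "p j x = q j x" if "j \<in> {1..l}" "\<not> x < n" for j x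
    using that comm_tuples_permutes[OF p that(1)] comm_tuples_permutes[OF q that(1)]
    by (simp add: permutes_def)
  moreover have "p j = q j" if "j \<notin> {1..l}" for j
    using that p q by (simp add: comm_tuples_outside)
  ultimately show "p = q"
    by (intro ext) (metis not_less)
qed

lemma finite_orbit_codes: "finite (orbit_codes l n)"
  unfolding orbit_codes_def
  by (intro finite_SigmaI finite_cartesian_product finite_PiE finite_permutations) auto

lemma finite_comm_tuples: "finite (comm_tuples l n)"
proof -
  have "orbit_code l n ` comm_tuples l n \<subseteq> orbit_codes l n"
    using orbit_code_in by blast
  then show ?thesis
    using finite_orbit_codes inj_on_orbit_code by (metis finite_imageD finite_subset)
qed

lemma card_orbit_codes_le:
  "card (orbit_codes l n)
     \<le> card ({..<n} \<rightarrow>\<^sub>E {..<n}) * card ({..<n} \<rightarrow>\<^sub>E {f. f permutes {..<n}}) * max_part_prod n ^ l"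
proof -
  let ?R = "{..<n} \<rightarrow>\<^sub>E {..<n}"
  let ?H = "{..<n} \<rightarrow>\<^sub>E {f. f permutes {..<n}}"
  let ?V = "\<lambda>r. \<Pi>\<^sub>E z \<in> {1..l} \<times> r ` {..<n}. {x \<in> {..<n}. r x = snd z}"
  have card_V: "card (?V r) \<le> max_part_prod n ^ l" for r :: "nat \<Rightarrow> nat"
  proof -
    have "card (?V r) = (\<Prod>z \<in> {1..l} \<times> r ` {..<n}. card {x \<in> {..<n}. r x = snd z})"
      by (rule card_PiE) auto
    also have "\<dots> = (\<Prod>j \<in> {1..l}. \<Prod>y \<in> r ` {..<n}. card {x \<in> {..<n}. r x = y})"
      by (subst prod.cartesian_product) (simp add: case_prod_beta)
    also have "\<dots> = (\<Prod>y \<in> r ` {..<n}. card {x \<in> {..<n}. r x = y}) ^ l"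
      by simp
    also have "\<dots> \<le> max_part_prod n ^ l"
      using prod_card_fibres_le_max_part_prod[of "{..<n}" r] by (simp add: power_mono)
    finally show ?thesis .
  qed
  have "finite ?R" "finite ?H"
    by (intro finite_PiE finite_permutations; simp)+
  moreover have "finite (?V r)" for r :: "nat \<Rightarrow> nat"
    by (intro finite_PiE) simp_all
  ultimately have "card (orbit_codes l n) = (\<Sum>r \<in> ?R. card (?H \<times> ?V r))"
    unfolding orbit_codes_def by (simp add: card_SigmaI)
  also have "\<dots> \<le> (\<Sum>r \<in> ?R. card ?H * max_part_prod n ^ l)"
    unfolding card_cartesian_product by (intro sum_mono mult_le_mono2 card_V)
  finally show ?thesis by simp
qed

lemma card_comm_tuples_le: "\<exists>K. \<forall>l. card (comm_tuples l n) \<le> K * max_part_prod n ^ l"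
proof -
  have "card (comm_tuples l n) \<le> card (orbit_codes l n)" for l
    using inj_on_orbit_code orbit_code_in finite_orbit_codes by (intro card_inj_on_le) auto
  then show ?thesis
    using card_orbit_codes_le le_trans by blast
qed

definition rotation :: "nat \<Rightarrow> nat \<Rightarrow> nat \<Rightarrow> nat" where
  "rotation k a x = (if x < k then (x + a) mod k else x)"

lemma rotation_add: "rotation k a \<circ> rotation k b = rotation k (a + b)"
proof
  fix x
  show "(rotation k a \<circ> rotation k b) x = rotation k (a + b) x"
    using mod_add_right_eq[of a "b + x" k] by (simp add: rotation_def add_ac)
qed

lemma rotation_multiple: "k dvd c \<Longrightarrow> rotation k c = id"
  by (rule ext) (auto simp: rotation_def elim!: dvdE)

lemma rotation_permutes:
  assumes "0 < k"
  shows "rotation k a permutes {..<k}"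
proof (rule inj_imp_permutes)
  have "a mod k < k" "k * (a div k) + a mod k = a"
    using assms by simp_all
  then have "k - a mod k + a = k * (a div k) + k"
    by linarith
  then have "k dvd k - a mod k + a"
    by simp
  then have "rotation k (k - a mod k) \<circ> rotation k a = id"
    by (simp add: rotation_add rotation_multiple)
  then show "inj_on (rotation k a) {..<k}"
    by (metis inj_on_inverseI comp_apply id_apply)
qed (use assms in \<open>simp_all add: rotation_def\<close>)

definition rotation_tuple :: "nat \<Rightarrow> nat \<Rightarrow> (nat \<Rightarrow> nat) \<Rightarrow> perm_tuple" where
  "rotation_tuple l k e j = (if j \<in> {1..l} then rotation k (e j) else id)"

lemma rotation_tuple_in: "0 < k \<Longrightarrow> rotation_tuple l k e \<in> comm_tuples l k"
  by (simp add: comm_tuples_def rotation_tuple_def rotation_permutes rotation_add add.commute)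

lemma card_comm_tuples_ge: "0 < k \<Longrightarrow> k ^ l \<le> card (comm_tuples l k)"
proof -
  assume k: "0 < k"
  have "inj_on (rotation_tuple l k) ({1..l} \<rightarrow>\<^sub>E {..<k})"
  proof (rule inj_onI)
    fix e e' assume e: "e \<in> {1..l} \<rightarrow>\<^sub>E {..<k}" and e': "e' \<in> {1..l} \<rightarrow>\<^sub>E {..<k}"
      and eq: "rotation_tuple l k e = rotation_tuple l k e'"
    have "e j = e' j" if "j \<in> {1..l}" for j
      using fun_cong[OF fun_cong[OF eq, of j], of 0] that e e' k
      by (auto simp: rotation_tuple_def rotation_def PiE_iff)
    then show "e = e'"
      using e e' by (metis PiE_ext)
  qed
  moreover have "rotation_tuple l k ` ({1..l} \<rightarrow>\<^sub>E {..<k}) \<subseteq> comm_tuples l k"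
    using rotation_tuple_in[OF k] by blast
  ultimately have "card ({1..l} \<rightarrow>\<^sub>E {..<k}) \<le> card (comm_tuples l k)"
    by (rule card_inj_on_le[OF _ _ finite_comm_tuples])
  then show ?thesis by (simp add: card_PiE)
qed

definition perm_sum :: "nat \<Rightarrow> nat \<Rightarrow> (nat \<Rightarrow> nat) \<Rightarrow> (nat \<Rightarrow> nat) \<Rightarrow> nat \<Rightarrow> nat" where
  "perm_sum a b f g x = (if x < a then f x else if x < a + b then a + g (x - a) else x)"

lemma permutes_less: "f permutes {..<a} \<Longrightarrow> x < a \<Longrightarrow> f x < (a :: nat)"
  using permutes_in_image by fastforce

lemma perm_sum_comp:
  assumes "f' permutes {..<a}" "g' permutes {..<b}"
  shows "perm_sum a b f g \<circ> perm_sum a b f' g' = perm_sum a b (f \<circ> f') (g \<circ> g')"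
  using permutes_less[OF assms(1)] permutes_less[OF assms(2)]
  by (fastforce simp: perm_sum_def)

lemma perm_sum_permutes:
  assumes f: "f permutes {..<a}" and g: "g permutes {..<b}"
  shows "perm_sum a b f g permutes {..<a + b}"
proof (rule inj_imp_permutes)
  have "perm_sum a b (inv f) (inv g) \<circ> perm_sum a b f g = perm_sum a b id id"
    using perm_sum_comp[OF f g] f g by (simp add: permutes_inv_o(2))
  also have "\<dots> = id"
    by (auto simp: perm_sum_def)
  finally show "inj_on (perm_sum a b f g) {..<a + b}"
    by (metis inj_on_inverseI comp_apply id_apply)
qed (use permutes_less[OF f] permutes_less[OF g] in \<open>auto simp: perm_sum_def trans_less_add1\<close>)

lemma perm_sum_inject:
  assumes "f permutes {..<a}" "f' permutes {..<a}" "g permutes {..<b}" "g' permutes {..<b}"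
    and "perm_sum a b f g = perm_sum a b f' g'"
  shows "f = f'" "g = g'"
proof -
  have "f x = f' x" for x
    using fun_cong[OF assms(5), of x] assms(1,2) by (cases "x < a") (simp_all add: perm_sum_def permutes_not_in)
  then show "f = f'" ..
  have "g x = g' x" for x
    using fun_cong[OF assms(5), of "a + x"] assms(3,4) by (cases "x < b") (simp_all add: perm_sum_def permutes_not_in)
  then show "g = g'" ..
qed

definition tuple_sum :: "nat \<Rightarrow> nat \<Rightarrow> nat \<Rightarrow> perm_tuple \<Rightarrow> perm_tuple \<Rightarrow> perm_tuple" where
  "tuple_sum l a b p q j = (if j \<in> {1..l} then perm_sum a b (p j) (q j) else id)"

lemma tuple_sum_in:
  assumes p: "p \<in> comm_tuples l a" and q: "q \<in> comm_tuples l b"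
  shows "tuple_sum l a b p q \<in> comm_tuples l (a + b)"
proof -
  have "tuple_sum l a b p q j \<circ> tuple_sum l a b p q k = tuple_sum l a b p q k \<circ> tuple_sum l a b p q j"
    if j: "j \<in> {1..l}" and k: "k \<in> {1..l}" for j k
  proof -
    have "tuple_sum l a b p q j \<circ> tuple_sum l a b p q k = perm_sum a b (p j \<circ> p k) (q j \<circ> q k)"
      using j k comm_tuples_permutes[OF p k] comm_tuples_permutes[OF q k]
      by (simp add: tuple_sum_def perm_sum_comp)
    also have "\<dots> = perm_sum a b (p k \<circ> p j) (q k \<circ> q j)"
      using comm_tuples_commute[OF p j k] comm_tuples_commute[OF q j k] by simp
    also have "\<dots> = tuple_sum l a b p q k \<circ> tuple_sum l a b p q j"
      using j k comm_tuples_permutes[OF p j] comm_tuples_permutes[OF q j]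
      by (simp add: tuple_sum_def perm_sum_comp)
    finally show ?thesis .
  qed
  then show ?thesis
    using comm_tuples_permutes[OF p] comm_tuples_permutes[OF q]
    by (simp add: comm_tuples_def tuple_sum_def perm_sum_permutes)
qed

lemma card_comm_tuples_mult_le:
  "card (comm_tuples l a) * card (comm_tuples l b) \<le> card (comm_tuples l (a + b))"
proof -
  have "inj_on (\<lambda>(p, q). tuple_sum l a b p q) (comm_tuples l a \<times> comm_tuples l b)"
  proof (rule inj_onI, clarify)
    fix p q p' q'
    assume p: "p \<in> comm_tuples l a" and q: "q \<in> comm_tuples l b"
      and p': "p' \<in> comm_tuples l a" and q': "q' \<in> comm_tuples l b"
      and eq: "tuple_sum l a b p q = tuple_sum l a b p' q'"
    have "p j = p' j \<and> q j = q' j" for j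
    proof (cases "j \<in> {1..l}")
      case True
      then show ?thesis
        using perm_sum_inject[OF comm_tuples_permutes[OF p True] comm_tuples_permutes[OF p' True]
            comm_tuples_permutes[OF q True] comm_tuples_permutes[OF q' True]] fun_cong[OF eq, of j]
        by (simp add: tuple_sum_def)
    qed (use p q p' q' in \<open>simp add: comm_tuples_outside\<close>)
    then show "p = p' \<and> q = q'" by (simp add: fun_eq_iff)
  qed
  moreover have "(\<lambda>(p, q). tuple_sum l a b p q) ` (comm_tuples l a \<times> comm_tuples l b) \<subseteq> comm_tuples l (a + b)"
    by (auto intro: tuple_sum_in)
  ultimately have "card (comm_tuples l a \<times> comm_tuples l b) \<le> card (comm_tuples l (a + b))"
    by (rule card_inj_on_le[OF _ _ finite_comm_tuples])
  then show ?thesis by (simp add: card_cartesian_product)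
qed

lemma card_comm_tuples_ge_power:
  assumes "0 < k" "1 \<le> t"
  shows "k ^ (t * l) \<le> card (comm_tuples l (t * k))"
  using assms(2)
proof (induction t rule: dec_induct)
  case base
  then show ?case using card_comm_tuples_ge[OF assms(1)] by simp
next
  case (step t)
  have "k ^ (Suc t * l) = k ^ (t * l) * k ^ l"
    by (simp add: power_add)
  also have "\<dots> \<le> card (comm_tuples l (t * k)) * card (comm_tuples l k)"
    using step card_comm_tuples_ge[OF assms(1)] by (intro mult_le_mono) auto
  also have "\<dots> \<le> card (comm_tuples l (Suc t * k))"
    using card_comm_tuples_mult_le[of l "t * k" k] by (simp add: add.commute)
  finally show ?case .
qed

lemma Delta_neg_iff:
  assumes "n \<ge> 1"
  shows "Delta l n < 0 \<longleftrightarrow>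
    (n + 1) * card (comm_tuples l n) ^ 2 < n * card (comm_tuples l (n - 1)) * card (comm_tuples l (n + 1))"
proof -
  define F where "F = (fact (n - 1) :: real)"
  define x where "x = real n"
  have pos: "F > 0" "x > 0" using assms by (simp_all add: F_def x_def)
  have facts: "fact (n - 1) = F" "fact n = x * F" "fact (n + 1) = (x + 1) * (x * F)"
    using assms by (simp_all add: F_def x_def fact_reduce)
  have key: "y * (x * F)\<^sup>2 * ((c / (x * F))\<^sup>2 - b / F * (d / (y * (x * F))))
      = y * c\<^sup>2 - x * b * d" if "y > 0" for b c d y :: real
    using pos that by (simp add: field_simps power2_eq_square)
  have "(x + 1) * (x * F)\<^sup>2 * Delta l n
      = (x + 1) * real (card (comm_tuples l n)) ^ 2
        - x * real (card (comm_tuples l (n - 1))) * real (card (comm_tuples l (n + 1)))"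
    unfolding Delta_def N_comm_def facts by (rule key) (use pos in simp)
  also have "\<dots> = real ((n + 1) * card (comm_tuples l n) ^ 2)
        - real (n * card (comm_tuples l (n - 1)) * card (comm_tuples l (n + 1)))"
    by (simp add: x_def algebra_simps)
  finally have eq: "(x + 1) * (x * F)\<^sup>2 * Delta l n = \<dots>" .
  have "Delta l n < 0 \<longleftrightarrow> (x + 1) * (x * F)\<^sup>2 * Delta l n < 0"
    using pos by (simp add: mult_less_0_iff)
  also have "\<dots> \<longleftrightarrow> (n + 1) * card (comm_tuples l n) ^ 2
      < n * card (comm_tuples l (n - 1)) * card (comm_tuples l (n + 1))"
    unfolding eq diff_less_0_iff_less of_nat_less_iff ..
  finally show ?thesis .
qed

lemma card_comm_tuples_3t1_sq_le:
  assumes t: "t \<ge> 1"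
  shows "\<exists>K. \<forall>l. card (comm_tuples l (3 * t + 1)) ^ 2 \<le> K * (16 * 9 ^ (t - 1)) ^ l"
proof -
  let ?m = "max_part_prod (3 * t + 1)"
  obtain K where K: "\<And>l. card (comm_tuples l (3 * t + 1)) \<le> K * ?m ^ l"
    using card_comm_tuples_le by blast
  have "?m ^ 2 = 16 * 9 ^ (t - 1)"
    using max_part_prod_3t1[OF t] by (simp add: power2_eq_square power_mult_distrib[symmetric])
  have "card (comm_tuples l (3 * t + 1)) ^ 2 \<le> K ^ 2 * (16 * 9 ^ (t - 1)) ^ l" for l
  proof -
    have "card (comm_tuples l (3 * t + 1)) ^ 2 \<le> (K * ?m ^ l) ^ 2"
      using K by (rule power_mono) simp
    also have "\<dots> = K ^ 2 * (?m ^ 2) ^ l"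
      by (metis power_mult power_mult_distrib mult.commute)
    finally show ?thesis
      unfolding \<open>?m ^ 2 = 16 * 9 ^ (t - 1)\<close> .
  qed
  then show ?thesis by blast
qed

lemma card_comm_tuples_3t_3t2_ge:
  assumes t: "t \<ge> 1"
  shows "(18 * 9 ^ (t - 1)) ^ l \<le> card (comm_tuples l (3 * t)) * card (comm_tuples l (3 * t + 2))"
proof -
  have "9 * 9 ^ (t - 1) = (3 * 3 :: nat) ^ t"
    using t by (simp flip: power_Suc)
  then have base: "18 * 9 ^ (t - 1) = 2 * (3 ^ t * 3 ^ t :: nat)"
    unfolding power_mult_distrib by linarith
  have "(18 * 9 ^ (t - 1)) ^ l = (3 ^ (t * l) * (2 ^ l * 3 ^ (t * l)) :: nat)"
    by (simp only: base power_mult_distrib power_mult mult.left_commute)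
  also have "\<dots> \<le> card (comm_tuples l (t * 3)) * (card (comm_tuples l 2) * card (comm_tuples l (t * 3)))"
    using card_comm_tuples_ge_power[of 3 t l] card_comm_tuples_ge[of 2 l] t
    by (intro mult_mono) auto
  also have "\<dots> \<le> card (comm_tuples l (3 * t)) * card (comm_tuples l (3 * t + 2))"
    using card_comm_tuples_mult_le[of l 2 "t * 3"] by (simp add: mult.commute)
  finally show ?thesis .
qed

lemma eventually_Delta_neg:
  assumes t: "t \<ge> 1"
  shows "\<forall>\<^sub>F l in sequentially. Delta l (3 * t + 1) < 0"
proof -
  define n where "n = 3 * t + 1"
  define \<beta> where "\<beta> = (9 :: nat) ^ (t - 1)"
  obtain K where K: "\<And>l. card (comm_tuples l n) ^ 2 \<le> K * (16 * \<beta>) ^ l"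
    using card_comm_tuples_3t1_sq_le[OF t] unfolding n_def \<beta>_def by blast
  have "\<forall>\<^sub>F l in sequentially. real ((n + 1) * K) * 16 ^ l < 18 ^ l"
    by real_asymp
  then show ?thesis
  proof (rule eventually_mono)
    fix l
    assume "real ((n + 1) * K) * 16 ^ l < 18 ^ l"
    then have "(n + 1) * K * 16 ^ l < 18 ^ l"
      using of_nat_less_iff[of "(n + 1) * K * 16 ^ l" "18 ^ l", where 'a = real] by simp
    then have "(n + 1) * K * (16 * \<beta>) ^ l < (18 * \<beta>) ^ l"
      by (simp add: \<beta>_def power_mult_distrib)
    moreover have "(n + 1) * card (comm_tuples l n) ^ 2 \<le> (n + 1) * K * (16 * \<beta>) ^ l"
      using mult_le_mono2[OF K[of l], of "n + 1"] by (simp only: mult.assoc)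
    moreover have "(18 * \<beta>) ^ l \<le> card (comm_tuples l (n - 1)) * card (comm_tuples l (n + 1))"
      using card_comm_tuples_3t_3t2_ge[OF t, of l] by (simp add: n_def \<beta>_def)
    moreover have "\<dots> \<le> n * card (comm_tuples l (n - 1)) * card (comm_tuples l (n + 1))"
      by (simp add: n_def)
    ultimately have "(n + 1) * card (comm_tuples l n) ^ 2
        < n * card (comm_tuples l (n - 1)) * card (comm_tuples l (n + 1))"
      by linarith
    then show "Delta l (3 * t + 1) < 0"
      using Delta_neg_iff[of n l] by (simp add: n_def)
  qed
qed

theorem corollary1p6:
  fixes n0 :: "nat \<Rightarrow> int"
  assumes "\<forall>l\<in>S_eventually_pos. \<forall>n::nat. n \<ge> 1 \<and> int n \<ge> n0 l \<longrightarrow> Delta l n > 0"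
    and "infinite S_eventually_pos"
  shows "\<forall>B::int. \<exists>l\<in>S_eventually_pos. n0 l > B"
proof (rule ccontr)
  assume "\<not> (\<forall>B::int. \<exists>l\<in>S_eventually_pos. n0 l > B)"
  then obtain B where B: "\<forall>l\<in>S_eventually_pos. n0 l \<le> B"
    by (auto simp: not_less)
  define t where "t = nat B + 1"
  have "t \<ge> 1" by (simp add: t_def)
  then obtain L where L: "\<And>l. l \<ge> L \<Longrightarrow> Delta l (3 * t + 1) < 0"
    using eventually_Delta_neg unfolding eventually_sequentially by blast
  have "\<not> (\<forall>l\<in>S_eventually_pos. l \<le> L)"
    using assms(2) finite_nat_set_iff_bounded_le by blast
  then obtain l where l: "l \<in> S_eventually_pos" "l \<ge> L"
    by (auto simp: not_le intro: less_imp_le)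
  have "n0 l \<le> int (3 * t + 1)"
    using B l(1) by (fastforce simp: t_def)
  then have "Delta l (3 * t + 1) > 0"
    using assms(1) l(1) by simp
  with L[OF l(2)] show False
    by simp
qed

end
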